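(* Let $\mathcal{H}$ be a $d$-dimensional Hilbert space with orthonormal basis $\{|1\rangle,\dots,|d\rangle\}$ and let $0\le n\le d$. Define $A_n:\mathcal{H}^{\otimes n}\to\mathcal{H}^{\otimes d-n}$ by $$A_n=\frac{1}{\sqrt{(d-n)!\,n!}}\sum_{\sigma\in S_d}\operatorname{sgn}(\sigma)\,|\sigma_{n+1},\dots,\sigma_d\rangle\langle\sigma_1,\dots,\sigma_n|,$$ where $S_d$ is the symmetric group on $\{1,\dots,d\}$. Let $\mathcal{E}:\mathcal{B}(\mathcal{H}^{\otimes n})\to\mathcal{B}(\mathcal{H}^{\otimes d-n})$ be a completely positive trace-preserving map having $A_n$ as one of its Kraus operators, and $\mathcal{D}:\mathcal{B}(\mathcal{H}^{\otimes d-n})\to\mathcal{B}(\mathcal{H}^{\otimes n})$ a completely positive trace-preserving map having $A_n^\dagger$ as one of its Kraus operators. Then for every unitary $U$ on $\mathcal{H}$ and every density operator $\rho$ supported on the antisymmetric subspace of $\mathcal{H}^{\otimes n}$, $$\mathcal{D}\big(U^{\otimes d-n}\,\mathcal{E}(\rho)\,U^{\dagger\otimes d-n}\big)=U^{*\otimes n}\rho\,(U^{*\dagger})^{\otimes n},$$ where $U^*$ is the entrywise complex conjugate of $U$ in the basis $\{|i\rangle\}$.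
   Context: The antisymmetric subspace of $\mathcal{H}^{\otimes m}$ is the subspace of vectors $v$ with $P_\pi v=\operatorname{sgn}(\pi)v$ for every permutation $P_\pi$ of the tensor factors. *)

theory Defs
  imports Complex_Main "HOL-Combinatorics.Permutations"
begin

text \<open>Basis of H^{(x) m} for dim H = d: tuples (lists) of length m with entries in {0..<d}
  (basis vector |i> of H is indexed by i-1).  Operators between tensor powers are
  represented by their matrix entries in this product basis; only entries with indices in
  the relevant index sets are meaningful.\<close>

type_synonym qop = "nat list \<Rightarrow> nat list \<Rightarrow> complex"
type_synonym qvec = "nat list \<Rightarrow> complex"

definition tup :: "nat \<Rightarrow> nat \<Rightarrow> nat list set" where
  "tup d m = {xs. length xs = m \<and> set xs \<subseteq> {..<d}}"

definition mmul :: "nat list set \<Rightarrow> qop \<Rightarrow> qop \<Rightarrow> qop" where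
  "mmul T X Y = (\<lambda>i k. \<Sum>j\<in>T. X i j * Y j k)"

definition adj :: "qop \<Rightarrow> qop" where
  "adj X = (\<lambda>i j. cnj (X j i))"

definition apply_op :: "nat list set \<Rightarrow> qop \<Rightarrow> qvec \<Rightarrow> qvec" where
  "apply_op T X v = (\<lambda>i. \<Sum>j\<in>T. X i j * v j)"

definition tpow :: "(nat \<Rightarrow> nat \<Rightarrow> complex) \<Rightarrow> qop" where
  "tpow U = (\<lambda>i j. \<Prod>k<length i. U (i ! k) (j ! k))"

definition conj_mat :: "(nat \<Rightarrow> nat \<Rightarrow> complex) \<Rightarrow> nat \<Rightarrow> nat \<Rightarrow> complex" where
  "conj_mat U = (\<lambda>a b. cnj (U a b))"

definition unitary_mat :: "nat \<Rightarrow> (nat \<Rightarrow> nat \<Rightarrow> complex) \<Rightarrow> bool" where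
  "unitary_mat d U \<longleftrightarrow>
     (\<forall>i<d. \<forall>j<d. (\<Sum>k<d. cnj (U k i) * U k j) = (if i = j then 1 else 0))"

definition A_op :: "nat \<Rightarrow> nat \<Rightarrow> qop" where
  "A_op d n = (\<lambda>i k. complex_of_real (1 / sqrt (real (fact (d - n) * fact n))) *
     (\<Sum>\<sigma>\<in>{\<sigma>. \<sigma> permutes {..<d}}.
        if map \<sigma> [n..<d] = i \<and> map \<sigma> [0..<n] = k then of_int (sign \<sigma>) else 0))"

definition perm_factors :: "(nat \<Rightarrow> nat) \<Rightarrow> nat list \<Rightarrow> nat list" where
  "perm_factors \<pi> i = map (\<lambda>k. i ! \<pi> k) [0..<length i]"

definition antisym_vec :: "nat \<Rightarrow> nat \<Rightarrow> qvec \<Rightarrow> bool" where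
  "antisym_vec d m v \<longleftrightarrow>
     (\<forall>\<pi>. \<pi> permutes {..<m} \<longrightarrow>
        (\<forall>i\<in>tup d m. v (perm_factors \<pi> i) = of_int (sign \<pi>) * v i))"

definition supported_on_antisym :: "nat \<Rightarrow> nat \<Rightarrow> qop \<Rightarrow> bool" where
  "supported_on_antisym d m \<rho> \<longleftrightarrow> (\<forall>v. antisym_vec d m (apply_op (tup d m) \<rho> v))"

definition density_op :: "nat \<Rightarrow> nat \<Rightarrow> qop \<Rightarrow> bool" where
  "density_op d m \<rho> \<longleftrightarrow>
     (\<forall>v. (\<Sum>i\<in>tup d m. \<Sum>j\<in>tup d m. cnj (v i) * \<rho> i j * v j) \<in> \<real> \<and>
          0 \<le> Re (\<Sum>i\<in>tup d m. \<Sum>j\<in>tup d m. cnj (v i) * \<rho> i j * v j)) \<and>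
     (\<Sum>i\<in>tup d m. \<rho> i i) = 1"

definition kraus_rep :: "nat list set \<Rightarrow> nat list set \<Rightarrow> (nat \<Rightarrow> qop) \<Rightarrow> nat \<Rightarrow> (qop \<Rightarrow> qop) \<Rightarrow> bool" where
  "kraus_rep Tin Tout K r \<Phi> \<longleftrightarrow>
     (\<forall>a\<in>Tin. \<forall>b\<in>Tin. (\<Sum>l<r. mmul Tout (adj (K l)) (K l) a b) = (if a = b then 1 else 0)) \<and>
     (\<forall>X. \<forall>i\<in>Tout. \<forall>j\<in>Tout.
        \<Phi> X i j = (\<Sum>l<r. mmul Tin (mmul Tin (K l) X) (adj (K l)) i j))"

definition cptp_with_kraus :: "nat list set \<Rightarrow> nat list set \<Rightarrow> (qop \<Rightarrow> qop) \<Rightarrow> qop \<Rightarrow> bool" where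
  "cptp_with_kraus Tin Tout \<Phi> B \<longleftrightarrow>
     (\<exists>K r. kraus_rep Tin Tout K r \<Phi> \<and> (\<exists>l<r. \<forall>i\<in>Tout. \<forall>a\<in>Tin. K l i a = B i a))"

end

theory Submission
  imports Defs "Jordan_Normal_Form.Determinant" "HOL-Combinatorics.Multiset_Permutations"
begin

text \<open>
  Up to normalisation \<open>A\<^sub>n\<close> is the Levi-Civita tensor \<open>\<epsilon>\<close>, read as a map from the first
  \<open>n\<close> to the last \<open>d - n\<close> tensor factors. Total antisymmetry of \<open>\<epsilon>\<close> makes
  \<open>A\<^sub>n\<^sup>\<dagger> A\<^sub>n\<close> the identity on antisymmetric vectors, so \<open>A\<^sub>n\<close> is an isometry there. Since the
  squared norms of the images under all Kraus operators of a trace-preserving map add up to the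
  squared norm of the input, every other Kraus operator of \<open>\<E>\<close> must annihilate the columns
  of \<open>\<rho>\<close>, whence \<open>\<E>(\<rho>) = A\<^sub>n \<rho> A\<^sub>n\<^sup>\<dagger>\<close>; the same argument applied to \<open>A\<^sub>n\<^sup>\<dagger>\<close> on the range
  of \<open>A\<^sub>n\<close> shows that \<open>\<D>\<close> undoes this. Finally the invariance \<open>U\<^sup>\<otimes>\<^sup>d \<epsilon> = det U \<epsilon>\<close>
  gives \<open>U\<^sup>\<otimes>\<^sup>(\<^sup>d\<^sup>-\<^sup>n\<^sup>) A\<^sub>n = det U A\<^sub>n (U\<^sup>*)\<^sup>\<otimes>\<^sup>n\<close>, and the phase \<open>|det U|\<^sup>2 = 1\<close> cancels.
\<close>

section \<open>Matrices indexed by tuples\<close>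

lemma mmul_assoc:
  assumes "finite A" "finite B"
  shows "mmul B (mmul A X Y) Z = mmul A X (mmul B Y Z)"
  unfolding mmul_def sum_distrib_left sum_distrib_right
  by (intro ext, subst sum.swap) (simp add: mult.assoc)

lemma adj_mmul: "adj (mmul A X Y) = mmul A (adj Y) (adj X)"
  unfolding adj_def mmul_def by (simp add: mult.commute)

lemma adj_adj [simp]: "adj (adj X) = X"
  unfolding adj_def by simp

lemma mmul_eq_apply_op: "mmul T X Y i c = apply_op T X (\<lambda>k. Y k c) i"
  by (simp add: mmul_def apply_op_def)

lemma apply_op_mmul: "apply_op T (mmul S X Y) v = apply_op S X (apply_op T Y v)"
  unfolding apply_op_def mmul_def sum_distrib_left sum_distrib_right
  by (intro ext, subst sum.swap) (simp add: mult.assoc)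

lemma apply_op_cong:
  "(\<And>a. a \<in> T \<Longrightarrow> v a = w a) \<Longrightarrow> apply_op T X v i = apply_op T X w i"
  unfolding apply_op_def by (intro sum.cong) simp_all

lemma apply_op_sum: "apply_op T (\<lambda>i a. \<Sum>l\<in>L. M l i a) v i = (\<Sum>l\<in>L. apply_op T (M l) v i)"
  unfolding apply_op_def sum_distrib_right by (rule sum.swap)

lemma mmul_sandwich_cong:
  assumes "\<And>a b. a \<in> T \<Longrightarrow> b \<in> T \<Longrightarrow> X a b = Y a b"
  shows "mmul T (mmul T P X) Q i j = mmul T (mmul T P Y) Q i j"
  unfolding mmul_def using assms by (intro sum.cong refl) simp

lemma mmul_sandwich_scale:
  assumes YZ: "\<And>a k. a \<in> I \<Longrightarrow> k \<in> T \<Longrightarrow> Y a k = s * Z a k" and b: "b \<in> I" and c: "c \<in> I"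
  shows "mmul T (mmul T Y X) (adj Y) b c = (s * cnj s) * mmul T (mmul T Z X) (adj Z) b c"
proof -
  have "mmul T Y X b k = s * mmul T Z X b k" for k
    unfolding mmul_def sum_distrib_left using YZ[OF b] by (intro sum.cong refl) (simp add: mult.assoc)
  moreover have "adj Y k c = cnj s * adj Z k c" if "k \<in> T" for k
    using YZ[OF c that] by (simp add: adj_def)
  ultimately show ?thesis
    unfolding mmul_def[of T "mmul T Y X"] mmul_def[of T "mmul T Z X"] sum_distrib_left
    by (intro sum.cong refl) (simp add: ac_simps)
qed

lemma adj_mmul_sandwich:
  assumes fin: "finite T" and herm: "\<And>a b. a \<in> T \<Longrightarrow> b \<in> T \<Longrightarrow> adj \<rho> a b = \<rho> a b"
  shows "adj (mmul T (mmul T V \<rho>) (adj V)) = mmul T (mmul T V \<rho>) (adj V)"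
proof -
  have "adj (mmul T (mmul T V \<rho>) (adj V)) = mmul T (mmul T V (adj \<rho>)) (adj V)"
    using fin by (simp add: adj_mmul mmul_assoc)
  also have "\<dots> = mmul T (mmul T V \<rho>) (adj V)"
    using herm by (intro ext mmul_sandwich_cong)
  finally show ?thesis .
qed

lemma sesquilinear_form_restrict:
  assumes "finite T" "S \<subseteq> T" and v: "\<And>x. x \<notin> S \<Longrightarrow> v x = 0"
  shows "(\<Sum>i\<in>T. \<Sum>j\<in>T. cnj (v i) * \<rho> i j * v j) = (\<Sum>i\<in>S. \<Sum>j\<in>S. cnj (v i) * \<rho> i j * v j)"
proof -
  have "(\<Sum>i\<in>T. \<Sum>j\<in>T. cnj (v i) * \<rho> i j * v j) = (\<Sum>i\<in>S. \<Sum>j\<in>T. cnj (v i) * \<rho> i j * v j)"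
    by (rule sum.mono_neutral_right[OF assms(1,2)]) (simp add: v)
  also have "\<dots> = (\<Sum>i\<in>S. \<Sum>j\<in>S. cnj (v i) * \<rho> i j * v j)"
    by (intro sum.cong refl sum.mono_neutral_right[OF assms(1,2)]) (simp add: v)
  finally show ?thesis .
qed

lemma hermitian_if_quadratic_form_real:
  assumes fin: "finite T"
    and real: "\<And>v. (\<Sum>i\<in>T. \<Sum>j\<in>T. cnj (v i) * \<rho> i j * v j) \<in> \<real>"
    and a: "a \<in> T" and b: "b \<in> T"
  shows "\<rho> a b = cnj (\<rho> b a)"
proof (cases "a = b")
  case True
  define v where "v x = (if x = a then 1 else 0 :: complex)" for x
  have "(\<Sum>i\<in>T. \<Sum>j\<in>T. cnj (v i) * \<rho> i j * v j) = \<rho> a a"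
    using sesquilinear_form_restrict[OF fin, of "{a}" v] a by (simp add: v_def)
  then show ?thesis using real[of v] True by (simp add: complex_is_Real_iff complex_eq_iff)
next
  case False
  define q where "q \<alpha> \<beta> = (\<Sum>i\<in>T. \<Sum>j\<in>T. cnj (if i = a then \<alpha> else if i = b then \<beta> else 0)
      * \<rho> i j * (if j = a then \<alpha> else if j = b then \<beta> else 0))" for \<alpha> \<beta>
  have q: "q \<alpha> \<beta> = cnj \<alpha> * \<rho> a a * \<alpha> + cnj \<alpha> * \<rho> a b * \<beta> + cnj \<beta> * \<rho> b a * \<alpha>
      + cnj \<beta> * \<rho> b b * \<beta>" for \<alpha> \<beta>
    unfolding q_def using a b False
    by (subst sesquilinear_form_restrict[OF fin, of "{a, b}"]) (simp_all add: algebra_simps)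
  have Im_q: "Im (q \<alpha> \<beta>) = 0" for \<alpha> \<beta>
    using real unfolding q_def by (simp add: complex_is_Real_iff)
  have ii: "\<i> * x * \<i> = - x" for x :: complex
    by (metis complex_i_mult_minus mult.assoc mult.commute)
  have "Im (\<rho> a a) = 0" "Im (\<rho> b b) = 0"
    using Im_q[of 1 0] Im_q[of 0 1] by (simp_all add: q)
  moreover have "Im (\<rho> a b) + Im (\<rho> b a) = 0" "Re (\<rho> a b) - Re (\<rho> b a) = 0"
    using Im_q[of 1 1] Im_q[of 1 \<i>] calculation by (simp_all add: q ii)
  ultimately show ?thesis by (simp add: complex_eq_iff)
qed

definition cinner :: "nat list set \<Rightarrow> qvec \<Rightarrow> qvec \<Rightarrow> complex" where
  "cinner T x y = (\<Sum>a\<in>T. cnj (x a) * y a)"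

lemma cinner_self: "cinner T x x = of_real (\<Sum>a\<in>T. (cmod (x a))\<^sup>2)"
  unfolding cinner_def of_real_sum by (intro sum.cong refl) (metis complex_norm_square mult.commute)

lemma cinner_cong:
  "(\<And>a. a \<in> T \<Longrightarrow> x a = x' a) \<Longrightarrow> (\<And>a. a \<in> T \<Longrightarrow> y a = y' a) \<Longrightarrow> cinner T x y = cinner T x' y'"
  unfolding cinner_def by (intro sum.cong) simp_all

lemma cinner_sum_right: "cinner T x (\<lambda>a. \<Sum>l\<in>L. y l a) = (\<Sum>l\<in>L. cinner T x (y l))"
  unfolding cinner_def sum_distrib_left by (rule sum.swap)

lemma cinner_apply_op:
  "cinner Tout (apply_op Tin B x) (apply_op Tin B y)
     = cinner Tin x (apply_op Tin (mmul Tout (adj B) B) y)"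
proof -
  have "cinner Tout (apply_op Tin B x) (apply_op Tin B y)
      = (\<Sum>i\<in>Tout. \<Sum>a\<in>Tin. \<Sum>b\<in>Tin. cnj (x a) * (cnj (B i a) * B i b * y b))"
    unfolding cinner_def apply_op_def cnj_sum sum_product by (simp add: ac_simps)
  also have "\<dots> = (\<Sum>a\<in>Tin. \<Sum>b\<in>Tin. \<Sum>i\<in>Tout. cnj (x a) * (cnj (B i a) * B i b * y b))"
    by (subst sum.swap) (intro sum.cong refl sum.swap)
  also have "\<dots> = cinner Tin x (apply_op Tin (mmul Tout (adj B) B) y)"
    unfolding cinner_def apply_op_def mmul_def adj_def sum_distrib_left sum_distrib_right
    by (simp add: ac_simps)
  finally show ?thesis .
qed

lemma cinner_apply_op_isometry:
  assumes "\<And>a. a \<in> Tin \<Longrightarrow> apply_op Tin (mmul Tout (adj B) B) x a = x a"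
  shows "cinner Tout (apply_op Tin B x) (apply_op Tin B x) = cinner Tin x x"
  unfolding cinner_apply_op using assms by (rule cinner_cong[OF refl])

section \<open>Kraus representations\<close>

lemma kraus_rep_sum_cinner:
  assumes "kraus_rep Tin Tout K r \<Phi>" "finite Tin"
  shows "(\<Sum>l<r. cinner Tout (apply_op Tin (K l) x) (apply_op Tin (K l) x)) = cinner Tin x x"
proof -
  have unit: "apply_op Tin (\<lambda>a b. \<Sum>l<r. mmul Tout (adj (K l)) (K l) a b) x a = x a" if "a \<in> Tin" for a
  proof -
    have "apply_op Tin (\<lambda>a b. \<Sum>l<r. mmul Tout (adj (K l)) (K l) a b) x a
        = (\<Sum>b\<in>Tin. (if a = b then 1 else 0) * x b)"
      using assms that unfolding kraus_rep_def apply_op_def by (intro sum.cong) simp_all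
    also have "\<dots> = (\<Sum>b\<in>Tin. if a = b then x b else 0)"
      by (intro sum.cong) simp_all
    also have "\<dots> = x a"
      using assms(2) that by simp
    finally show ?thesis .
  qed
  have "(\<Sum>l<r. cinner Tout (apply_op Tin (K l) x) (apply_op Tin (K l) x))
      = cinner Tin x (\<lambda>a. \<Sum>l<r. apply_op Tin (mmul Tout (adj (K l)) (K l)) x a)"
    by (simp add: cinner_apply_op cinner_sum_right)
  also have "\<dots> = cinner Tin x x"
    using unit by (intro cinner_cong) (simp_all flip: apply_op_sum)
  finally show ?thesis .
qed

text \<open>The squared norms \<open>\<parallel>K\<^sub>l x\<parallel>\<^sup>2\<close> are nonnegative and sum to \<open>\<parallel>x\<parallel>\<^sup>2\<close>, which the
  Kraus operator \<open>B\<close> alone already exhausts.\<close>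
lemma kraus_rep_apply_other_eq_0:
  assumes kr: "kraus_rep Tin Tout K r \<Phi>" and fin: "finite Tin" "finite Tout"
    and l0: "l0 < r" and KB: "\<forall>i\<in>Tout. \<forall>a\<in>Tin. K l0 i a = B i a"
    and iso: "cinner Tout (apply_op Tin B x) (apply_op Tin B x) = cinner Tin x x"
    and l: "l < r" "l \<noteq> l0" and i: "i \<in> Tout"
  shows "apply_op Tin (K l) x i = 0"
proof -
  define N where "N l = (\<Sum>i\<in>Tout. (cmod (apply_op Tin (K l) x i))\<^sup>2)" for l
  have N_nonneg: "N l \<ge> 0" for l
    unfolding N_def by (simp add: sum_nonneg)
  have "cinner Tout (apply_op Tin (K l0) x) (apply_op Tin (K l0) x) = cinner Tin x x"
    using iso KB unfolding apply_op_def by (simp cong: cinner_cong sum.cong)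
  then have "(\<Sum>l<r. complex_of_real (N l)) = complex_of_real (N l0)"
    using kraus_rep_sum_cinner[OF kr fin(1), of x] by (simp add: N_def cinner_self)
  then have "(\<Sum>l<r. N l) = N l0"
    by (metis of_real_eq_iff of_real_sum)
  moreover have "(\<Sum>l<r. N l) = N l0 + (\<Sum>l\<in>{..<r} - {l0}. N l)"
    using l0 by (simp add: sum.remove)
  ultimately have "(\<Sum>l\<in>{..<r} - {l0}. N l) = 0"
    by simp
  then have "N l = 0"
    using sum_nonneg_eq_0_iff[of "{..<r} - {l0}" N] N_nonneg l by simp
  then have "(cmod (apply_op Tin (K l) x i))\<^sup>2 = 0"
    using sum_nonneg_eq_0_iff[of Tout "\<lambda>i. (cmod (apply_op Tin (K l) x i))\<^sup>2"] fin(2) i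
    unfolding N_def by simp
  then show ?thesis by simp
qed

text \<open>The Kraus operators other than \<open>B\<close> annihilate the columns of \<open>X\<close>.\<close>
theorem cptp_with_kraus_eq_sandwich:
  assumes cptp: "cptp_with_kraus Tin Tout \<Phi> B" and fin: "finite Tin" "finite Tout"
    and iso: "\<And>c. c \<in> Tin \<Longrightarrow> cinner Tout (apply_op Tin B (\<lambda>a. X a c)) (apply_op Tin B (\<lambda>a. X a c))
                  = cinner Tin (\<lambda>a. X a c) (\<lambda>a. X a c)"
    and i: "i \<in> Tout" and j: "j \<in> Tout"
  shows "\<Phi> X i j = mmul Tin (mmul Tin B X) (adj B) i j"
proof -
  obtain K r l0 where kr: "kraus_rep Tin Tout K r \<Phi>" and l0: "l0 < r"
    and KB: "\<forall>i\<in>Tout. \<forall>a\<in>Tin. K l0 i a = B i a"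
    using cptp unfolding cptp_with_kraus_def by blast
  have other: "mmul Tin (mmul Tin (K l) X) (adj (K l)) i j = 0" if "l < r" "l \<noteq> l0" for l
  proof -
    have "mmul Tin (K l) X i c = 0" if "c \<in> Tin" for c
      using kraus_rep_apply_other_eq_0[OF kr fin l0 KB iso[OF that]] \<open>l < r\<close> \<open>l \<noteq> l0\<close> i
      by (simp add: apply_op_def mmul_def)
    then show ?thesis by (simp add: mmul_def)
  qed
  have "\<Phi> X i j = (\<Sum>l<r. mmul Tin (mmul Tin (K l) X) (adj (K l)) i j)"
    using kr i j unfolding kraus_rep_def by blast
  also have "\<dots> = (\<Sum>l\<in>{l0}. mmul Tin (mmul Tin (K l) X) (adj (K l)) i j)"
    using l0 other by (intro sum.mono_neutral_right) auto
  also have "\<dots> = mmul Tin (mmul Tin B X) (adj B) i j"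
    using KB i j by (simp add: mmul_def adj_def)
  finally show ?thesis .
qed

section \<open>Index tuples and antisymmetric vectors\<close>

lemma finite_tup [simp]: "finite (tup d m)"
  unfolding tup_def using finite_lists_length_eq[of "{..<d}" m] by (simp add: conj_commute)

lemma length_tup: "i \<in> tup d m \<Longrightarrow> length i = m"
  by (simp add: tup_def)

lemma tup_nth_less:
  assumes "i \<in> tup d m" "t < m"
  shows "i ! t < d"
proof -
  have "i ! t \<in> set i" "set i \<subseteq> {..<d}"
    using assms by (simp_all add: tup_def)
  then show ?thesis by auto
qed

lemma tup_Suc: "tup d (Suc m) = (\<lambda>(a, j). a # j) ` ({..<d} \<times> tup d m)"
proof -
  have "xs \<in> tup d (Suc m) \<longleftrightarrow> xs \<in> (\<lambda>(a, j). a # j) ` ({..<d} \<times> tup d m)" for xs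
  proof (cases xs)
    case (Cons y ys)
    have "xs \<in> (\<lambda>(a, j). a # j) ` ({..<d} \<times> tup d m) \<longleftrightarrow> (y, ys) \<in> {..<d} \<times> tup d m"
      unfolding Cons by force
    then show ?thesis unfolding Cons by (auto simp: tup_def)
  qed (auto simp: tup_def)
  then show ?thesis by blast
qed

lemma sum_tup_prod:
  fixes f :: "nat \<Rightarrow> nat \<Rightarrow> complex"
  shows "(\<Sum>j\<in>tup d m. \<Prod>t<m. f t (j ! t)) = (\<Prod>t<m. \<Sum>a<d. f t a)"
proof (induction m arbitrary: f)
  case 0
  have "tup d 0 = {[]}" by (auto simp: tup_def)
  then show ?case by simp
next
  case (Suc m)
  have inj: "inj_on (\<lambda>(a, j). a # j) ({..<d} \<times> tup d m)"
    by (auto simp: inj_on_def)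
  have "(\<Sum>j\<in>tup d (Suc m). \<Prod>t<Suc m. f t (j ! t))
      = (\<Sum>p\<in>{..<d} \<times> tup d m. \<Prod>t<Suc m. f t ((\<lambda>(a, j). a # j) p ! t))"
    unfolding tup_Suc by (rule sum.reindex[OF inj, unfolded o_def])
  also have "\<dots> = (\<Sum>a<d. \<Sum>j\<in>tup d m. \<Prod>t<Suc m. f t ((a # j) ! t))"
    unfolding sum.cartesian_product by (rule sum.cong) (simp_all add: case_prod_beta)
  also have "\<dots> = (\<Sum>a<d. \<Sum>j\<in>tup d m. f 0 a * (\<Prod>t<m. f (Suc t) (j ! t)))"
    by (simp only: prod.lessThan_Suc_shift nth_Cons_0 nth_Cons_Suc)
  also have "\<dots> = (\<Sum>a<d. f 0 a * (\<Prod>t<m. \<Sum>a<d. f (Suc t) a))"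
    by (simp add: Suc.IH[of "\<lambda>t. f (Suc t)"] flip: sum_distrib_left)
  also have "\<dots> = (\<Prod>t<Suc m. \<Sum>a<d. f t a)"
    by (simp only: prod.lessThan_Suc_shift sum_distrib_right)
  finally show ?case .
qed

lemma sum_tup_append:
  assumes nd: "n \<le> d"
  shows "(\<Sum>k\<in>tup d n. \<Sum>i\<in>tup d (d - n). g (k @ i)) = (\<Sum>J\<in>tup d d. g J)"
proof -
  have inj: "inj_on (\<lambda>(k, i). k @ i) (tup d n \<times> tup d (d - n))"
    by (auto simp: inj_on_def tup_def)
  have "(\<lambda>(k, i). k @ i) ` (tup d n \<times> tup d (d - n)) = tup d d"
  proof (intro equalityI subsetI)
    fix J assume "J \<in> (\<lambda>(k, i). k @ i) ` (tup d n \<times> tup d (d - n))"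
    then show "J \<in> tup d d" using nd by (auto simp: tup_def)
  next
    fix J assume "J \<in> tup d d"
    then have "take n J \<in> tup d n" "drop n J \<in> tup d (d - n)"
      using nd set_take_subset[of n J] set_drop_subset[of n J] by (auto simp: tup_def)
    moreover have "J = (\<lambda>(k, i). k @ i) (take n J, drop n J)"
      by simp
    ultimately show "J \<in> (\<lambda>(k, i). k @ i) ` (tup d n \<times> tup d (d - n))"
      by blast
  qed
  then have "(\<Sum>J\<in>tup d d. g J) = (\<Sum>(k, i)\<in>tup d n \<times> tup d (d - n). g (k @ i))"
    using sum.reindex[OF inj, of g] by (simp add: case_prod_beta o_def)
  then show ?thesis
    by (simp add: sum.cartesian_product)
qed

lemma perm_factors_eq_permute_list: "perm_factors = permute_list"
  unfolding perm_factors_def permute_list_def by (intro ext) simp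

lemma antisym_vec_iff:
  "antisym_vec d m v \<longleftrightarrow>
     (\<forall>\<pi>. \<pi> permutes {..<m} \<longrightarrow> (\<forall>i\<in>tup d m. v (permute_list \<pi> i) = of_int (sign \<pi>) * v i))"
  by (simp add: antisym_vec_def perm_factors_eq_permute_list)

lemma antisym_vecD:
  assumes "antisym_vec d m v" "\<pi> permutes {..<m}" "i \<in> tup d m"
  shows "v (permute_list \<pi> i) = of_int (sign \<pi>) * v i"
  using assms unfolding antisym_vec_iff by blast

lemma antisym_vec_mmul_col:
  assumes "\<And>c. antisym_vec d m (\<lambda>k. X k c)"
  shows "antisym_vec d m (\<lambda>k. mmul T X Y k c)"
  unfolding antisym_vec_iff mmul_def
  using antisym_vecD[OF assms] by (simp add: sum_distrib_left mult.assoc)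

lemma permute_list_in_tup:
  assumes "\<pi> permutes {..<m}" "i \<in> tup d m"
  shows "permute_list \<pi> i \<in> tup d m"
  using assms by (simp add: tup_def)

lemma permute_list_inv:
  assumes "\<pi> permutes {..<length i}"
  shows "permute_list (Hilbert_Choice.inv \<pi>) (permute_list \<pi> i) = i"
  using permute_list_compose[of "Hilbert_Choice.inv \<pi>" i \<pi>] permutes_inv[OF assms] assms
  by (simp add: permutes_inv_o)

lemma bij_betw_permute_list_tup:
  assumes \<pi>: "\<pi> permutes {..<m}"
  shows "bij_betw (permute_list \<pi>) (tup d m) (tup d m)"
proof (rule bij_betw_byWitness[where f' = "permute_list (Hilbert_Choice.inv \<pi>)"])
  have \<pi>': "Hilbert_Choice.inv \<pi> permutes {..<m}"
    using \<pi> by (rule permutes_inv)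
  show "\<forall>i\<in>tup d m. permute_list (Hilbert_Choice.inv \<pi>) (permute_list \<pi> i) = i"
    using \<pi> by (simp add: permute_list_inv length_tup)
  show "\<forall>i\<in>tup d m. permute_list \<pi> (permute_list (Hilbert_Choice.inv \<pi>) i) = i"
  proof
    fix i assume "i \<in> tup d m"
    then show "permute_list \<pi> (permute_list (Hilbert_Choice.inv \<pi>) i) = i"
      using permute_list_inv[of "Hilbert_Choice.inv \<pi>" i] \<pi>' permutes_inv_inv[OF \<pi>]
      by (simp add: length_tup)
  qed
  show "permute_list \<pi> ` tup d m \<subseteq> tup d m" "permute_list (Hilbert_Choice.inv \<pi>) ` tup d m \<subseteq> tup d m"
    using permute_list_in_tup \<pi> \<pi>' by blast+
qed

lemma permute_list_append:
  assumes "\<pi> permutes {..<length k}"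
  shows "permute_list \<pi> (k @ i) = permute_list \<pi> k @ i"
proof (rule nth_equalityI)
  fix t assume "t < length (permute_list \<pi> (k @ i))"
  moreover have "\<pi> t < length k \<longleftrightarrow> t < length k"
    using permutes_in_image[OF assms] by simp
  moreover have "t \<ge> length k \<Longrightarrow> \<pi> t = t"
    using permutes_not_in[OF assms] by simp
  ultimately show "permute_list \<pi> (k @ i) ! t = (permute_list \<pi> k @ i) ! t"
    by (auto simp: permute_list_def nth_append)
qed simp

text \<open>A transposition of two equal entries fixes the tuple but flips the sign.\<close>
lemma antisym_vec_not_distinct:
  assumes "antisym_vec d m x" "k \<in> tup d m" "\<not> distinct k"
  shows "x k = 0"
proof -
  have len: "length k = m" using assms(2) by (rule length_tup)
  obtain p q where pq: "p < m" "q < m" "p \<noteq> q" "k ! p = k ! q"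
    using assms(3) len by (auto simp: distinct_conv_nth)
  let ?\<pi> = "transpose p q"
  have perm: "?\<pi> permutes {..<m}" using pq by (intro permutes_swap_id) auto
  have "permute_list ?\<pi> k = k"
    by (rule nth_equalityI) (use pq len in \<open>auto simp: permute_list_def transpose_def\<close>)
  moreover have "sign ?\<pi> = -1" using pq by (simp add: sign_swap_id)
  ultimately have "x k = - x k"
    using antisym_vecD[OF assms(1) perm assms(2)] by simp
  then show ?thesis by simp
qed

lemma permutations_of_set_subset_tup:
  assumes "A \<subseteq> {..<d}" "card A = m"
  shows "permutations_of_set A \<subseteq> tup d m"
proof
  fix i assume "i \<in> permutations_of_set A"
  then have i: "distinct i" "set i = A"
    by (simp_all add: permutations_of_set_def)
  then have "length i = m"
    using assms(2) by (metis distinct_card)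
  then show "i \<in> tup d m"
    using i assms(1) by (simp add: tup_def)
qed

lemma append_in_permutations_of_set_iff:
  assumes "distinct k" "set k \<subseteq> A"
  shows "k @ i \<in> permutations_of_set A \<longleftrightarrow> i \<in> permutations_of_set (A - set k)"
proof -
  have "set (k @ i) = A \<and> distinct (k @ i) \<longleftrightarrow> set i = A - set k \<and> distinct i"
    using assms by (simp add: Un_Diff_cancel2) blast
  then show ?thesis by (simp only: permutations_of_set_def mem_Collect_eq)
qed

lemma append_in_permutations_of_set_same_set:
  assumes "k @ i \<in> permutations_of_set A" "k' @ i \<in> permutations_of_set A"
  shows "k' \<in> permutations_of_set (set k)"
proof -
  have "set k \<inter> set i = {}" "set k \<union> set i = A" "set k' \<inter> set i = {}" "set k' \<union> set i = A"
    "distinct k'"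
    using assms by (simp_all add: permutations_of_set_def)
  then have "set k' = set k" "distinct k'"
    by blast+
  then show ?thesis
    by (simp add: permutations_of_set_def)
qed

lemma adj_density_op:
  assumes "density_op d m \<rho>" "a \<in> tup d m" "b \<in> tup d m"
  shows "adj \<rho> a b = \<rho> a b"
proof -
  have "\<rho> b a = cnj (\<rho> a b)"
    by (rule hermitian_if_quadratic_form_real[OF finite_tup _ assms(3,2)])
      (use assms(1) in \<open>simp add: density_op_def\<close>)
  then show ?thesis by (simp add: adj_def)
qed

lemma supported_on_antisym_mmul_col:
  assumes "supported_on_antisym d n \<rho>"
  shows "antisym_vec d n (\<lambda>k. mmul (tup d n) \<rho> X k c)"
  using assms unfolding supported_on_antisym_def mmul_eq_apply_op by blast

lemma supported_on_antisym_col: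
  assumes "supported_on_antisym d n \<rho>" "c \<in> tup d n"
  shows "antisym_vec d n (\<lambda>k. \<rho> k c)"
proof -
  have "mmul (tup d n) \<rho> (\<lambda>a b. if a = b then 1 else 0) k c = \<rho> k c" for k
    using assms(2) by (simp add: mmul_def if_distrib cong: if_cong)
  with supported_on_antisym_mmul_col[OF assms(1), of "\<lambda>a b. if a = b then 1 else 0" c]
  show ?thesis by (simp only:)
qed

section \<open>The Levi-Civita symbol and the operator \<open>A\<^sub>n\<close>\<close>

definition levi_civita :: "nat \<Rightarrow> nat list \<Rightarrow> int" where
  "levi_civita d J = (\<Sum>\<sigma>\<in>{\<sigma>. \<sigma> permutes {..<d}}. if map \<sigma> [0..<d] = J then sign \<sigma> else 0)"

lemma map_permutes_in_permutations_of_set: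
  assumes "\<sigma> permutes {..<d}"
  shows "map \<sigma> [0..<d] \<in> permutations_of_set {..<d}"
proof -
  have "inj_on \<sigma> {..<d}" using permutes_inj_on[OF assms] .
  moreover have "\<sigma> ` {..<d} = {..<d}" using permutes_image[OF assms] .
  ultimately show ?thesis by (auto simp: permutations_of_set_def distinct_map atLeast0LessThan)
qed

lemma map_permutes_inj:
  assumes "\<sigma> permutes {..<d}" "\<tau> permutes {..<d}" "map \<sigma> [0..<d] = map \<tau> [0..<d]"
  shows "\<sigma> = \<tau>"
proof
  fix x show "\<sigma> x = \<tau> x"
    using assms by (cases "x < d") (auto simp: map_eq_conv permutes_not_in)
qed

lemma permutations_of_set_lessThan_obtain:
  assumes "J \<in> permutations_of_set {..<d}"
  obtains \<tau> where "\<tau> permutes {..<d}" "J = map \<tau> [0..<d]"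
proof -
  have "distinct J" "set J = set [0..<d]"
    using assms by (simp_all add: permutations_of_set_def atLeast0LessThan)
  then have "mset J = mset [0..<d]"
    by (metis distinct_upt set_eq_iff_mset_eq_distinct)
  then obtain \<tau> where \<tau>: "\<tau> permutes {..<d}" "permute_list \<tau> [0..<d] = J"
    by (rule mset_eq_permutation) simp
  have "permute_list \<tau> [0..<d] = map \<tau> [0..<d]"
    unfolding permute_list_def by (rule map_cong) (use permutes_in_image[OF \<tau>(1)] in auto)
  then show ?thesis using that \<tau> by simp
qed

lemma levi_civita_eq_0:
  assumes "J \<notin> permutations_of_set {..<d}"
  shows "levi_civita d J = 0"
  unfolding levi_civita_def using assms map_permutes_in_permutations_of_set
  by (intro sum.neutral) auto

lemma levi_civita_map_permutes:
  assumes "\<tau> permutes {..<d}"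
  shows "levi_civita d (map \<tau> [0..<d]) = sign \<tau>"
proof -
  have "levi_civita d (map \<tau> [0..<d]) = (\<Sum>\<sigma>\<in>{\<sigma>. \<sigma> permutes {..<d}}. if \<sigma> = \<tau> then sign \<sigma> else 0)"
    unfolding levi_civita_def using map_permutes_inj[OF _ assms] by (intro sum.cong refl) auto
  also have "\<dots> = sign \<tau>" using assms by (simp add: sum.delta' finite_permutations)
  finally show ?thesis .
qed

lemma levi_civita_square:
  assumes "J \<in> permutations_of_set {..<d}"
  shows "levi_civita d J * levi_civita d J = 1"
  by (rule permutations_of_set_lessThan_obtain[OF assms]) (simp add: levi_civita_map_permutes)

lemma levi_civita_permute_list:
  assumes \<pi>: "\<pi> permutes {..<d}" and J: "J \<in> permutations_of_set {..<d}"
  shows "levi_civita d (permute_list \<pi> J) = sign \<pi> * levi_civita d J"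
proof -
  obtain \<tau> where \<tau>: "\<tau> permutes {..<d}" "J = map \<tau> [0..<d]"
    using J by (rule permutations_of_set_lessThan_obtain)
  have "permute_list \<pi> J = map (\<tau> \<circ> \<pi>) [0..<d]"
    unfolding permute_list_def \<tau>(2) by (rule map_cong) (use permutes_in_image[OF \<pi>] in auto)
  then have "levi_civita d (permute_list \<pi> J) = sign (\<tau> \<circ> \<pi>)"
    using permutes_compose[OF \<pi> \<tau>(1)] by (simp add: levi_civita_map_permutes)
  also have "\<dots> = sign \<tau> * sign \<pi>"
    by (rule sign_compose) (use \<pi> \<tau>(1) permutes_imp_permutation in auto)
  finally show ?thesis using \<tau> by (simp add: levi_civita_map_permutes)
qed

definition A_op_coeff :: "nat \<Rightarrow> nat \<Rightarrow> complex" where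
  "A_op_coeff d n = complex_of_real (1 / sqrt (real (fact (d - n) * fact n)))"

lemma A_op_coeff_square: "A_op_coeff d n * A_op_coeff d n = 1 / of_nat (fact (d - n) * fact n)"
proof -
  have "(1 / sqrt r) * (1 / sqrt r) = 1 / r" if "r > 0" for r :: real
    using that by (simp add: field_simps)
  from this[of "real (fact (d - n) * fact n)"] show ?thesis
    unfolding A_op_coeff_def by (metis of_nat_0_less_iff fact_gt_zero mult_pos_pos of_real_mult
        of_real_divide of_real_1 of_real_of_nat_eq)
qed

lemma A_op_levi_civita:
  assumes "n \<le> d" "length k = n"
  shows "A_op d n i k = A_op_coeff d n * of_int (levi_civita d (k @ i))"
proof -
  have "map \<sigma> [0..<d] = map \<sigma> [0..<n] @ map \<sigma> [n..<d]" for \<sigma> :: "nat \<Rightarrow> nat"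
    using assms(1) upt_add_eq_append[of 0 n "d - n"] by simp
  then have "(map \<sigma> [n..<d] = i \<and> map \<sigma> [0..<n] = k) \<longleftrightarrow> map \<sigma> [0..<d] = k @ i"
    for \<sigma> :: "nat \<Rightarrow> nat"
    using assms(2) by auto
  then show ?thesis
    unfolding A_op_def A_op_coeff_def levi_civita_def of_int_sum
    by (simp add: if_distrib cong: if_cong)
qed

lemma levi_civita_append_antisym_reorder:
  assumes x: "antisym_vec d n x" and k: "k \<in> tup d n" and nd: "n \<le> d"
    and ki: "k @ i \<in> permutations_of_set {..<d}" and k': "k' \<in> permutations_of_set (set k)"
  shows "of_int (levi_civita d (k' @ i)) * x k' = of_int (levi_civita d (k @ i)) * x k"
proof -
  have lk: "length k = n" using k by (rule length_tup)
  have "distinct k'" "set k' = set k" "distinct k"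
    using k' ki by (simp_all add: permutations_of_set_def)
  then have "mset k' = mset k"
    by (metis set_eq_iff_mset_eq_distinct)
  then obtain \<pi> where \<pi>: "\<pi> permutes {..<length k}" "permute_list \<pi> k = k'"
    by (rule mset_eq_permutation)
  have "\<pi> permutes {..<d}"
    by (rule permutes_subset[OF \<pi>(1)]) (use lk nd in auto)
  moreover have "k' @ i = permute_list \<pi> (k @ i)"
    using \<pi> by (simp add: permute_list_append)
  ultimately have "levi_civita d (k' @ i) = sign \<pi> * levi_civita d (k @ i)"
    using ki by (simp add: levi_civita_permute_list)
  moreover have "x k' = of_int (sign \<pi>) * x k"
    using antisym_vecD[OF x _ k] \<pi> lk by blast
  moreover have "(of_int (sign \<pi>) :: complex) * of_int (sign \<pi>) = 1"
    by (metis of_int_1 of_int_mult sign_idempotent)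
  ultimately show ?thesis
    by (simp add: algebra_simps)
qed

text \<open>Only the reorderings of \<open>k\<close> contribute, each with the same weight.\<close>
lemma sum_levi_civita_append_antisym:
  assumes x: "antisym_vec d n x" and k: "k \<in> tup d n" and nd: "n \<le> d"
    and ki: "k @ i \<in> permutations_of_set {..<d}"
  shows "(\<Sum>k'\<in>tup d n. of_int (levi_civita d (k' @ i)) * x k')
       = of_nat (fact n) * (of_int (levi_civita d (k @ i)) * x k)"
proof -
  let ?e = "\<lambda>J. of_int (levi_civita d J) :: complex"
  let ?Q = "permutations_of_set (set k)"
  have "distinct k" using ki by (simp add: permutations_of_set_def)
  moreover have "set k \<subseteq> {..<d}" "length k = n"
    using k by (simp_all add: tup_def)
  ultimately have Q: "?Q \<subseteq> tup d n" "card ?Q = fact n"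
    by (simp_all add: permutations_of_set_subset_tup distinct_card)
  have "?e (k' @ i) = 0" if "k' \<notin> ?Q" for k'
    using that append_in_permutations_of_set_same_set[OF ki, of k'] levi_civita_eq_0[of "k' @ i" d]
    by auto
  then have "(\<Sum>k'\<in>tup d n. ?e (k' @ i) * x k') = (\<Sum>k'\<in>?Q. ?e (k' @ i) * x k')"
    by (intro sum.mono_neutral_right[OF finite_tup Q(1)]) simp
  also have "\<dots> = (\<Sum>k'\<in>?Q. ?e (k @ i) * x k)"
    using levi_civita_append_antisym_reorder[OF x k nd ki] by (rule sum.cong[OF refl])
  finally show ?thesis
    using Q(2) by simp
qed

lemma levi_civita_append_mul_sum_antisym:
  assumes x: "antisym_vec d n x" and k: "k \<in> tup d n" and dk: "distinct k" and nd: "n \<le> d"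
  shows "of_int (levi_civita d (k @ i)) * (\<Sum>k'\<in>tup d n. of_int (levi_civita d (k' @ i)) * x k')
       = (if i \<in> permutations_of_set ({..<d} - set k) then of_nat (fact n) * x k else 0)"
proof -
  have ki: "k @ i \<in> permutations_of_set {..<d} \<longleftrightarrow> i \<in> permutations_of_set ({..<d} - set k)"
    using k dk by (intro append_in_permutations_of_set_iff) (simp_all add: tup_def)
  show ?thesis
  proof (cases "k @ i \<in> permutations_of_set {..<d}")
    case True
    have "(of_int (levi_civita d (k @ i)) :: complex) * of_int (levi_civita d (k @ i)) = 1"
      using levi_civita_square[OF True] by (metis of_int_1 of_int_mult)
    then show ?thesis
      unfolding sum_levi_civita_append_antisym[OF x k nd True]
      using True ki by (simp add: algebra_simps)
  next
    case False
    then show ?thesis using ki by (simp add: levi_civita_eq_0)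
  qed
qed

lemma apply_adj_A_op_A_op:
  assumes nd: "n \<le> d" and k: "k \<in> tup d n"
  shows "apply_op (tup d n) (mmul (tup d (d - n)) (adj (A_op d n)) (A_op d n)) x k
       = A_op_coeff d n * A_op_coeff d n * (\<Sum>i\<in>tup d (d - n).
           of_int (levi_civita d (k @ i)) * (\<Sum>k'\<in>tup d n. of_int (levi_civita d (k' @ i)) * x k'))"
proof -
  have "cnj (A_op_coeff d n) = A_op_coeff d n"
    by (simp add: A_op_coeff_def)
  then have "adj (A_op d n) k i = A_op_coeff d n * of_int (levi_civita d (k @ i))" for i
    using nd length_tup[OF k] by (simp add: adj_def A_op_levi_civita)
  moreover have "apply_op (tup d n) (A_op d n) x i
      = A_op_coeff d n * (\<Sum>k'\<in>tup d n. of_int (levi_civita d (k' @ i)) * x k')" for i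
    unfolding apply_op_def sum_distrib_left
    using nd by (intro sum.cong refl) (simp add: A_op_levi_civita length_tup mult.assoc)
  ultimately show ?thesis
    unfolding apply_op_mmul by (simp add: apply_op_def sum_distrib_left ac_simps)
qed

theorem apply_adj_A_op_A_op_antisym:
  assumes nd: "n \<le> d" and x: "antisym_vec d n x" and k: "k \<in> tup d n"
  shows "apply_op (tup d n) (mmul (tup d (d - n)) (adj (A_op d n)) (A_op d n)) x k = x k"
proof (cases "distinct k")
  case False
  then have "k @ i \<notin> permutations_of_set {..<d}" for i
    by (simp add: permutations_of_set_def)
  then show ?thesis
    using antisym_vec_not_distinct[OF x k False]
    by (simp add: apply_adj_A_op_A_op[OF nd k] levi_civita_eq_0)
next
  case True
  let ?P = "permutations_of_set ({..<d} - set k)"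
  have "set k \<subseteq> {..<d}" "card (set k) = n"
    using k True by (simp_all add: tup_def distinct_card)
  then have P: "?P \<subseteq> tup d (d - n)" "card ?P = fact (d - n)"
    by (simp_all add: permutations_of_set_subset_tup card_Diff_subset)
  have "(\<Sum>i\<in>tup d (d - n). of_int (levi_civita d (k @ i)) *
          (\<Sum>k'\<in>tup d n. of_int (levi_civita d (k' @ i)) * x k'))
      = (\<Sum>i\<in>tup d (d - n). if i \<in> ?P then of_nat (fact n) * x k else 0)"
    by (simp add: levi_civita_append_mul_sum_antisym[OF x k True nd])
  also have "\<dots> = of_nat (fact (d - n)) * (of_nat (fact n) * x k)"
    using P by (simp add: sum.inter_restrict[symmetric] Int_absorb1)
  finally show ?thesis
    by (simp add: apply_adj_A_op_A_op[OF nd k] A_op_coeff_square field_simps)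
qed

lemma cinner_apply_A_op_antisym:
  assumes "n \<le> d" "antisym_vec d n x"
  shows "cinner (tup d (d - n)) (apply_op (tup d n) (A_op d n) x) (apply_op (tup d n) (A_op d n) x)
       = cinner (tup d n) x x"
  using apply_adj_A_op_A_op_antisym[OF assms] by (rule cinner_apply_op_isometry)

lemma mmul_adj_A_op_A_op_sandwich:
  assumes nd: "n \<le> d" and cols: "\<And>c. antisym_vec d n (\<lambda>k. X k c)" and herm: "adj X = X"
    and i: "i \<in> tup d n" and j: "j \<in> tup d n"
  shows "mmul (tup d n) (mmul (tup d n) (mmul (tup d (d - n)) (adj (A_op d n)) (A_op d n)) X)
           (mmul (tup d (d - n)) (adj (A_op d n)) (A_op d n)) i j = X i j"
proof -
  let ?T = "tup d n" and ?P = "mmul (tup d (d - n)) (adj (A_op d n)) (A_op d n)"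
  have PX: "mmul ?T ?P X a c = X a c" if "a \<in> ?T" for a c
    unfolding mmul_eq_apply_op[of ?T ?P] using apply_adj_A_op_A_op_antisym[OF nd cols that] .
  have "mmul ?T (mmul ?T ?P X) ?P i j = mmul ?T X ?P i j"
    unfolding mmul_def[of ?T "mmul ?T ?P X"] using PX[OF i] by (simp add: mmul_def[of ?T X])
  also have "mmul ?T X ?P = adj (mmul ?T ?P X)"
    using herm by (simp add: adj_mmul)
  also have "adj (mmul ?T ?P X) i j = X i j"
    using PX[OF j] herm by (simp add: adj_def fun_eq_iff)
  finally show ?thesis .
qed

section \<open>Tensor powers of a unitary\<close>

lemma mmul_adj_tpow_conj_mat:
  assumes U: "unitary_mat d U" and b: "b \<in> tup d m" and b': "b' \<in> tup d m"
  shows "mmul (tup d m) (adj (tpow (conj_mat U))) (tpow (conj_mat U)) b b' = (if b = b' then 1 else 0)"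
proof -
  have lb: "length b = m" "length b' = m"
    using b b' by (simp_all add: length_tup)
  have bd: "b ! t < d" "b' ! t < d" if "t < m" for t
    using that b b' by (simp_all add: tup_nth_less)
  have "mmul (tup d m) (adj (tpow (conj_mat U))) (tpow (conj_mat U)) b b'
      = (\<Sum>k\<in>tup d m. \<Prod>t<m. U (k ! t) (b ! t) * cnj (U (k ! t) (b' ! t)))"
    unfolding mmul_def adj_def tpow_def conj_mat_def
    by (intro sum.cong refl) (simp add: length_tup prod.distrib)
  also have "\<dots> = (\<Prod>t<m. \<Sum>a<d. U a (b ! t) * cnj (U a (b' ! t)))"
    by (rule sum_tup_prod)
  also have "\<dots> = (\<Prod>t<m. if b ! t = b' ! t then 1 else 0)"
  proof (rule prod.cong[OF refl])
    fix t assume "t \<in> {..<m}"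
    then have "(\<Sum>a<d. cnj (U a (b' ! t)) * U a (b ! t)) = (if b' ! t = b ! t then 1 else 0)"
      using U bd unfolding unitary_mat_def by blast
    then show "(\<Sum>a<d. U a (b ! t) * cnj (U a (b' ! t))) = (if b ! t = b' ! t then 1 else 0)"
      by (simp add: mult.commute eq_commute)
  qed
  also have "\<dots> = (if b = b' then 1 else 0)"
  proof (cases "b = b'")
    case False
    then obtain t where "t < m" "b ! t \<noteq> b' ! t"
      using lb nth_equalityI by metis
    then show ?thesis
      using False by (intro trans[OF prod_zero]) auto
  qed simp
  finally show ?thesis .
qed

lemma antisym_vec_apply_tpow:
  assumes x: "antisym_vec d m x"
  shows "antisym_vec d m (apply_op (tup d m) (tpow g) x)"
  unfolding antisym_vec_iff
proof (intro allI impI ballI)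
  fix \<pi> i assume \<pi>: "\<pi> permutes {..<m}" and i: "i \<in> tup d m"
  have tpow_permute: "tpow g (permute_list \<pi> i) (permute_list \<pi> j) = tpow g i j"
    if "j \<in> tup d m" for j
  proof -
    have "tpow g (permute_list \<pi> i) (permute_list \<pi> j) = (\<Prod>t<m. g (i ! \<pi> t) (j ! \<pi> t))"
      using i that \<pi> by (simp add: tpow_def length_tup permute_list_nth)
    also have "\<dots> = (\<Prod>t<m. g (i ! t) (j ! t))"
      by (rule prod.reindex_bij_betw[OF permutes_imp_bij[OF \<pi>]])
    finally show ?thesis using i by (simp add: tpow_def length_tup)
  qed
  have "apply_op (tup d m) (tpow g) x (permute_list \<pi> i)
      = (\<Sum>j\<in>tup d m. tpow g (permute_list \<pi> i) (permute_list \<pi> j) * x (permute_list \<pi> j))"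
    unfolding apply_op_def by (rule sum.reindex_bij_betw[OF bij_betw_permute_list_tup[OF \<pi>], symmetric])
  also have "\<dots> = (\<Sum>j\<in>tup d m. of_int (sign \<pi>) * (tpow g i j * x j))"
    using tpow_permute antisym_vecD[OF x \<pi>] by (intro sum.cong refl) simp
  also have "\<dots> = of_int (sign \<pi>) * apply_op (tup d m) (tpow g) x i"
    unfolding apply_op_def by (rule sum_distrib_left[symmetric])
  finally show "apply_op (tup d m) (tpow g) x (permute_list \<pi> i)
      = of_int (sign \<pi>) * apply_op (tup d m) (tpow g) x i" .
qed

lemma supported_on_antisym_tpow_mmul_col:
  assumes "supported_on_antisym d n \<rho>"
  shows "antisym_vec d n (\<lambda>k. mmul (tup d n) (mmul (tup d n) (tpow g) \<rho>) X k c)"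
  using antisym_vec_apply_tpow[OF supported_on_antisym_mmul_col[OF assms]]
  by (simp add: mmul_assoc mmul_eq_apply_op[of _ "tpow g"])

definition square_mat :: "nat \<Rightarrow> (nat \<Rightarrow> nat \<Rightarrow> complex) \<Rightarrow> complex mat" where
  "square_mat d U = mat d d (\<lambda>(a, b). U a b)"

lemma det_square_mat_unitary:
  assumes U: "unitary_mat d U"
  shows "cnj (det (square_mat d U)) * det (square_mat d U) = 1"
proof -
  let ?M = "square_mat d U"
  let ?M' = "transpose_mat (map_mat cnj ?M)"
  have M: "?M \<in> carrier_mat d d" and M': "?M' \<in> carrier_mat d d"
    by (simp_all add: square_mat_def)
  have "?M' * ?M = 1\<^sub>m d"
  proof (rule eq_matI)
    fix i j assume ij: "i < dim_row (1\<^sub>m d)" "j < dim_col (1\<^sub>m d)"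
    then have "(\<Sum>k<d. cnj (U k i) * U k j) = (if i = j then 1 else 0)"
      using U unfolding unitary_mat_def by simp
    then show "(?M' * ?M) $$ (i, j) = 1\<^sub>m d $$ (i, j)"
      using ij by (simp add: square_mat_def scalar_prod_def atLeast0LessThan)
  qed (simp_all add: square_mat_def)
  then have "det ?M' * det ?M = 1"
    using det_mult[OF M' M] by simp
  moreover have "det ?M' = cnj (det ?M)"
  proof -
    have "det ?M' = det (map_mat cnj ?M)"
      by (rule det_transpose[of _ d]) (simp add: square_mat_def)
    also have "\<dots> = cnj (det ?M)"
      unfolding det_def by (simp add: square_mat_def)
    finally show ?thesis .
  qed
  ultimately show ?thesis by simp
qed

text \<open>Selecting rows of \<open>U\<close> according to \<open>L\<close> permutes them if \<open>L\<close> is a permutation, and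
  repeats a row otherwise.\<close>
lemma det_mat_rows_levi_civita:
  assumes L: "L \<in> tup d d"
  shows "det (mat d d (\<lambda>(t, s). U (L ! t) s)) = of_int (levi_civita d L) * det (square_mat d U)"
proof (cases "L \<in> permutations_of_set {..<d}")
  case True
  obtain \<tau> where \<tau>: "\<tau> permutes {..<d}" "L = map \<tau> [0..<d]"
    using True by (rule permutations_of_set_lessThan_obtain)
  have "\<tau> i < d" if "i < d" for i
    using permutes_in_image[OF \<tau>(1)] that by simp
  then have "mat d d (\<lambda>(t, s). U (L ! t) s) = mat d d (\<lambda>(i, j). square_mat d U $$ (\<tau> i, j))"
    by (intro eq_matI) (simp_all add: \<tau>(2) square_mat_def)
  moreover have "\<tau> permutes {0..<d}"
    using \<tau>(1) by (simp add: atLeast0LessThan)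
  ultimately show ?thesis
    using det_permute_rows[of "square_mat d U" d \<tau>] \<tau>
    by (simp add: square_mat_def levi_civita_map_permutes)
next
  case False
  let ?M = "mat d d (\<lambda>(t, s). U (L ! t) s)"
  have lL: "length L = d" and sL: "set L \<subseteq> {..<d}"
    using L by (simp_all add: tup_def)
  have "\<not> distinct L"
  proof
    assume dL: "distinct L"
    then have "set L = {..<d}"
      using sL lL by (simp add: card_subset_eq distinct_card)
    then show False using False dL by (simp add: permutations_of_set_def)
  qed
  then obtain p q where pq: "p < d" "q < d" "p \<noteq> q" "L ! p = L ! q"
    using lL by (auto simp: distinct_conv_nth)
  have "row ?M p = row ?M q"
    by (rule eq_vecI) (simp_all add: pq)
  then have "det ?M = 0"
    using det_identical_rows[of ?M d p q] pq by simp
  then show ?thesis using False by (simp add: levi_civita_eq_0)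
qed

lemma leibniz_rows_levi_civita:
  assumes L: "L \<in> tup d d"
  shows "(\<Sum>\<sigma>\<in>{\<sigma>. \<sigma> permutes {..<d}}. of_int (sign \<sigma>) * (\<Prod>t<d. U (L ! t) (\<sigma> t)))
       = of_int (levi_civita d L) * det (square_mat d U)"
proof -
  let ?M = "mat d d (\<lambda>(t, s). U (L ! t) s)"
  have "det ?M = (\<Sum>p\<in>{p. p permutes {0..<d}}. signof p * (\<Prod>i = 0..<d. ?M $$ (i, p i)))"
    by (rule det_def') simp
  also have "\<dots> = (\<Sum>\<sigma>\<in>{\<sigma>. \<sigma> permutes {..<d}}. of_int (sign \<sigma>) * (\<Prod>t<d. U (L ! t) (\<sigma> t)))"
    unfolding atLeast0LessThan
  proof (rule sum.cong[OF refl])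
    fix p assume p: "p \<in> {p. p permutes {..<d}}"
    have "(\<Prod>i\<in>{..<d}. ?M $$ (i, p i)) = (\<Prod>t<d. U (L ! t) (p t))"
    proof (rule prod.cong[OF refl])
      fix i assume i: "i \<in> {..<d}"
      then have "p i < d" using permutes_in_image[of p "{..<d}"] p by simp
      then show "?M $$ (i, p i) = U (L ! i) (p i)" using i by simp
    qed
    then show "signof p * (\<Prod>i\<in>{..<d}. ?M $$ (i, p i)) = of_int (sign p) * (\<Prod>t<d. U (L ! t) (p t))"
      by simp
  qed
  finally show ?thesis
    using det_mat_rows_levi_civita[OF L] by simp
qed

lemma sum_tup_levi_civita:
  "(\<Sum>J\<in>tup d d. of_int (levi_civita d J) * h J)
     = (\<Sum>\<sigma>\<in>{\<sigma>. \<sigma> permutes {..<d}}. of_int (sign \<sigma>) * h (map \<sigma> [0..<d]))"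
proof -
  have "(\<Sum>J\<in>tup d d. of_int (levi_civita d J) * h J)
      = (\<Sum>\<sigma>\<in>{\<sigma>. \<sigma> permutes {..<d}}. \<Sum>J\<in>tup d d.
           if map \<sigma> [0..<d] = J then of_int (sign \<sigma>) * h J else 0)"
    unfolding levi_civita_def of_int_sum sum_distrib_right
    by (subst sum.swap) (intro sum.cong refl, simp)
  also have "\<dots> = (\<Sum>\<sigma>\<in>{\<sigma>. \<sigma> permutes {..<d}}. of_int (sign \<sigma>) * h (map \<sigma> [0..<d]))"
  proof (rule sum.cong[OF refl])
    fix \<sigma> assume "\<sigma> \<in> {\<sigma>. \<sigma> permutes {..<d}}"
    then have "map \<sigma> [0..<d] \<in> tup d d"
      using permutations_of_setD(1)[OF map_permutes_in_permutations_of_set] by (auto simp: tup_def)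
    then show "(\<Sum>J\<in>tup d d. if map \<sigma> [0..<d] = J then of_int (sign \<sigma>) * h J else 0)
        = of_int (sign \<sigma>) * h (map \<sigma> [0..<d])"
      by (simp add: sum.delta)
  qed
  finally show ?thesis .
qed

lemma prod_lessThan_add:
  fixes g :: "nat \<Rightarrow> 'a::comm_monoid_mult"
  shows "(\<Prod>t<n + m. g t) = (\<Prod>t<n. g t) * (\<Prod>t<m. g (n + t))"
  by (induction m) (simp_all add: ac_simps)

text \<open>The classical invariance \<open>U\<^sup>\<otimes>\<^sup>d \<epsilon> = det U \<epsilon>\<close> of the Levi-Civita tensor.\<close>
lemma mmul_tpow_A_op_adj_tpow_conj_mat:
  assumes nd: "n \<le> d" and i: "i \<in> tup d (d - n)" and k: "k \<in> tup d n"
  shows "mmul (tup d n) (mmul (tup d (d - n)) (tpow U) (A_op d n)) (adj (tpow (conj_mat U))) i k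
       = det (square_mat d U) * A_op d n i k"
proof -
  let ?T = "tup d n" and ?S = "tup d (d - n)" and ?L = "k @ i"
  have li: "length i = d - n" and lk: "length k = n"
    using i k by (simp_all add: length_tup)
  have L: "?L \<in> tup d d"
    using i k nd by (auto simp: tup_def)
  have "mmul ?T (mmul ?S (tpow U) (A_op d n)) (adj (tpow (conj_mat U))) i k
      = A_op_coeff d n * (\<Sum>k'\<in>?T. \<Sum>i'\<in>?S.
          of_int (levi_civita d (k' @ i')) * (\<Prod>t<d. U (?L ! t) ((k' @ i') ! t)))"
    unfolding mmul_def sum_distrib_right sum_distrib_left
  proof (intro sum.cong refl)
    fix k' i' assume k': "k' \<in> ?T" and i': "i' \<in> ?S"
    have lk': "length k' = n" and li': "length i' = d - n"
      using k' i' by (simp_all add: length_tup)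
    have "(\<Prod>t<d. U (?L ! t) ((k' @ i') ! t)) = (\<Prod>t<n. U (k ! t) (k' ! t)) * (\<Prod>t<d - n. U (i ! t) (i' ! t))"
      using prod_lessThan_add[of "\<lambda>t. U (?L ! t) ((k' @ i') ! t)" n "d - n"] nd lk lk'
      by (simp add: nth_append)
    then show "tpow U i i' * A_op d n i' k' * adj (tpow (conj_mat U)) k' k
        = A_op_coeff d n * (of_int (levi_civita d (k' @ i')) * (\<Prod>t<d. U (?L ! t) ((k' @ i') ! t)))"
      using li lk by (simp add: A_op_levi_civita[OF nd lk'] tpow_def adj_def conj_mat_def)
  qed
  also have "\<dots> = A_op_coeff d n * (\<Sum>J\<in>tup d d. of_int (levi_civita d J) * (\<Prod>t<d. U (?L ! t) (J ! t)))"
    using sum_tup_append[OF nd, of "\<lambda>J. of_int (levi_civita d J) * (\<Prod>t<d. U (?L ! t) (J ! t))"]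
    by simp
  also have "\<dots> = det (square_mat d U) * A_op d n i k"
    using leibniz_rows_levi_civita[OF L, of U] by (simp add: sum_tup_levi_civita A_op_levi_civita[OF nd lk])
  finally show ?thesis .
qed

lemma tpow_mmul_A_op:
  assumes nd: "n \<le> d" and U: "unitary_mat d U" and i: "i \<in> tup d (d - n)" and k: "k \<in> tup d n"
  shows "mmul (tup d (d - n)) (tpow U) (A_op d n) i k
       = det (square_mat d U) * mmul (tup d n) (A_op d n) (tpow (conj_mat U)) i k"
proof -
  let ?T = "tup d n" and ?S = "tup d (d - n)"
  let ?W = "tpow U" and ?V = "tpow (conj_mat U)" and ?A = "A_op d n"
  have "mmul ?S ?W ?A i k = (\<Sum>k'\<in>?T. if k' = k then mmul ?S ?W ?A i k' else 0)"
    using k by simp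
  also have "\<dots> = mmul ?T (mmul ?S ?W ?A) (mmul ?T (adj ?V) ?V) i k"
    unfolding mmul_def[of ?T "mmul ?S ?W ?A"] using mmul_adj_tpow_conj_mat[OF U _ k]
    by (intro sum.cong refl) simp
  also have "\<dots> = mmul ?T (mmul ?T (mmul ?S ?W ?A) (adj ?V)) ?V i k"
    by (simp add: mmul_assoc)
  also have "\<dots> = det (square_mat d U) * mmul ?T ?A ?V i k"
    unfolding mmul_def[of ?T "mmul ?T (mmul ?S ?W ?A) (adj ?V)"] mmul_def[of ?T ?A]
    by (simp add: mmul_tpow_A_op_adj_tpow_conj_mat[OF nd i] sum_distrib_left mult.assoc)
  finally show ?thesis .
qed

text \<open>\<open>U\<^sup>\<otimes>\<^sup>(\<^sup>d\<^sup>-\<^sup>n\<^sup>) A\<close> and \<open>A (U\<^sup>*)\<^sup>\<otimes>\<^sup>n\<close> differ by the phase \<open>det U\<close>, which cancels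
  between \<open>A\<close> and \<open>A\<^sup>\<dagger>\<close>.\<close>
theorem A_op_covariant:
  assumes nd: "n \<le> d" and U: "unitary_mat d U" and b: "b \<in> tup d (d - n)" and c: "c \<in> tup d (d - n)"
  shows "mmul (tup d (d - n)) (mmul (tup d (d - n)) (tpow U)
            (mmul (tup d n) (mmul (tup d n) (A_op d n) X) (adj (A_op d n)))) (adj (tpow U)) b c
       = mmul (tup d n) (mmul (tup d n) (A_op d n)
            (mmul (tup d n) (mmul (tup d n) (tpow (conj_mat U)) X) (adj (tpow (conj_mat U)))))
            (adj (A_op d n)) b c"
proof -
  let ?T = "tup d n" and ?S = "tup d (d - n)"
  let ?W = "tpow U" and ?V = "tpow (conj_mat U)" and ?A = "A_op d n"
  let ?\<delta> = "det (square_mat d U)"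
  have out: "mmul ?S (mmul ?S ?W (mmul ?T (mmul ?T ?A X) (adj ?A))) (adj ?W)
      = mmul ?T (mmul ?T (mmul ?S ?W ?A) X) (adj (mmul ?S ?W ?A))"
    by (simp add: mmul_assoc adj_mmul)
  have inp: "mmul ?T (mmul ?T ?A (mmul ?T (mmul ?T ?V X) (adj ?V))) (adj ?A)
      = mmul ?T (mmul ?T (mmul ?T ?A ?V) X) (adj (mmul ?T ?A ?V))"
    by (simp add: mmul_assoc adj_mmul)
  have "mmul ?T (mmul ?T (mmul ?S ?W ?A) X) (adj (mmul ?S ?W ?A)) b c
      = (?\<delta> * cnj ?\<delta>) * mmul ?T (mmul ?T (mmul ?T ?A ?V) X) (adj (mmul ?T ?A ?V)) b c"
    by (rule mmul_sandwich_scale[OF tpow_mmul_A_op[OF nd U] b c])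
  moreover have "?\<delta> * cnj ?\<delta> = 1"
    using det_square_mat_unitary[OF U] by (simp add: mult.commute)
  ultimately show ?thesis
    unfolding out inp by simp
qed

section \<open>The channels \<open>\<E>\<close> and \<open>\<D>\<close>\<close>

lemma cptp_with_kraus_A_op_eq:
  assumes nd: "n \<le> d" and E: "cptp_with_kraus (tup d n) (tup d (d - n)) E (A_op d n)"
    and cols: "\<And>c. c \<in> tup d n \<Longrightarrow> antisym_vec d n (\<lambda>k. X k c)"
    and "b \<in> tup d (d - n)" "c \<in> tup d (d - n)"
  shows "E X b c = mmul (tup d n) (mmul (tup d n) (A_op d n) X) (adj (A_op d n)) b c"
proof (rule cptp_with_kraus_eq_sandwich[OF E finite_tup finite_tup])
  fix c assume "c \<in> tup d n"
  show "cinner (tup d (d - n)) (apply_op (tup d n) (A_op d n) (\<lambda>a. X a c))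
      (apply_op (tup d n) (A_op d n) (\<lambda>a. X a c)) = cinner (tup d n) (\<lambda>a. X a c) (\<lambda>a. X a c)"
    using cinner_apply_A_op_antisym[OF nd cols[OF \<open>c \<in> tup d n\<close>]] .
qed (fact assms)+

text \<open>The columns of \<open>A X A\<^sup>\<dagger>\<close> are images of antisymmetric vectors under \<open>A\<close>, on which
  \<open>A\<^sup>\<dagger>\<close> is again an isometry.\<close>
lemma cptp_with_kraus_adj_A_op_recovers:
  assumes nd: "n \<le> d" and D: "cptp_with_kraus (tup d (d - n)) (tup d n) D (adj (A_op d n))"
    and cols: "\<And>c. antisym_vec d n (\<lambda>k. X k c)" and herm: "adj X = X"
    and \<sigma>: "\<And>b c. b \<in> tup d (d - n) \<Longrightarrow> c \<in> tup d (d - n) \<Longrightarrow>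
            \<sigma> b c = mmul (tup d n) (mmul (tup d n) (A_op d n) X) (adj (A_op d n)) b c"
    and i: "i \<in> tup d n" and j: "j \<in> tup d n"
  shows "D \<sigma> i j = X i j"
proof -
  let ?T = "tup d n" and ?S = "tup d (d - n)" and ?A = "A_op d n"
  define y where "y c = (\<lambda>k. mmul ?T X (adj ?A) k c)" for c
  have \<sigma>_col: "\<sigma> b c = apply_op ?T ?A (y c) b" if "b \<in> ?S" "c \<in> ?S" for b c
    using \<sigma>[OF that] by (simp add: y_def mmul_assoc mmul_eq_apply_op[of _ ?A])
  have iso: "cinner ?T (apply_op ?S (adj ?A) (\<lambda>b. \<sigma> b c)) (apply_op ?S (adj ?A) (\<lambda>b. \<sigma> b c))
      = cinner ?S (\<lambda>b. \<sigma> b c) (\<lambda>b. \<sigma> b c)" if c: "c \<in> ?S" for c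
  proof -
    have "apply_op ?S (adj ?A) (\<lambda>b. \<sigma> b c) k = y c k" if "k \<in> ?T" for k
      using apply_adj_A_op_A_op_antisym[OF nd antisym_vec_mmul_col[OF cols] that] \<sigma>_col[OF _ c]
      by (simp add: y_def apply_op_mmul cong: apply_op_cong)
    then have "cinner ?T (apply_op ?S (adj ?A) (\<lambda>b. \<sigma> b c)) (apply_op ?S (adj ?A) (\<lambda>b. \<sigma> b c))
        = cinner ?T (y c) (y c)"
      by (intro cinner_cong)
    also have "\<dots> = cinner ?S (\<lambda>b. \<sigma> b c) (\<lambda>b. \<sigma> b c)"
      using cinner_apply_A_op_antisym[OF nd antisym_vec_mmul_col[OF cols]] \<sigma>_col[OF _ c]
      by (simp add: y_def cong: cinner_cong)
    finally show ?thesis .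
  qed
  have "D \<sigma> i j = mmul ?S (mmul ?S (adj ?A) \<sigma>) ?A i j"
    using cptp_with_kraus_eq_sandwich[OF D finite_tup finite_tup iso i j] by simp
  also have "\<dots> = mmul ?S (mmul ?S (adj ?A) (mmul ?T (mmul ?T ?A X) (adj ?A))) ?A i j"
    using \<sigma> by (intro mmul_sandwich_cong)
  also have "\<dots> = mmul ?T (mmul ?T (mmul ?S (adj ?A) ?A) X) (mmul ?S (adj ?A) ?A) i j"
    by (simp add: mmul_assoc)
  also have "\<dots> = X i j"
    by (rule mmul_adj_A_op_A_op_sandwich[OF nd cols herm i j])
  finally show ?thesis .
qed

theorem theorem1:
  fixes d n :: nat and E D :: "qop \<Rightarrow> qop" and U :: "nat \<Rightarrow> nat \<Rightarrow> complex" and \<rho> :: qop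
  assumes "n \<le> d"
    and "cptp_with_kraus (tup d n) (tup d (d - n)) E (A_op d n)"
    and "cptp_with_kraus (tup d (d - n)) (tup d n) D (adj (A_op d n))"
    and "unitary_mat d U"
    and "density_op d n \<rho>"
    and "supported_on_antisym d n \<rho>"
  shows "\<forall>i\<in>tup d n. \<forall>j\<in>tup d n.
           D (mmul (tup d (d - n)) (mmul (tup d (d - n)) (tpow U) (E \<rho>)) (adj (tpow U))) i j
         = mmul (tup d n) (mmul (tup d n) (tpow (conj_mat U)) \<rho>) (adj (tpow (conj_mat U))) i j"
proof (intro ballI)
  let ?T = "tup d n" and ?S = "tup d (d - n)" and ?A = "A_op d n" and ?V = "tpow (conj_mat U)"
  define \<tau> where "\<tau> = mmul ?T (mmul ?T ?V \<rho>) (adj ?V)"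
  have E\<rho>: "E \<rho> b c = mmul ?T (mmul ?T ?A \<rho>) (adj ?A) b c" if "b \<in> ?S" "c \<in> ?S" for b c
    using cptp_with_kraus_A_op_eq[OF assms(1,2) supported_on_antisym_col[OF assms(6)] that] .
  have \<sigma>: "mmul ?S (mmul ?S (tpow U) (E \<rho>)) (adj (tpow U)) b c = mmul ?T (mmul ?T ?A \<tau>) (adj ?A) b c"
    if "b \<in> ?S" "c \<in> ?S" for b c
    using A_op_covariant[OF assms(1,4) that] E\<rho> mmul_sandwich_cong[of ?S "E \<rho>"]
    by (simp add: \<tau>_def)
  have \<tau>_cols: "antisym_vec d n (\<lambda>k. \<tau> k c)" for c
    unfolding \<tau>_def by (rule supported_on_antisym_tpow_mmul_col[OF assms(6)])
  have \<tau>_herm: "adj \<tau> = \<tau>"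
    unfolding \<tau>_def using adj_density_op[OF assms(5)] by (intro adj_mmul_sandwich) simp_all
  fix i j assume "i \<in> ?T" "j \<in> ?T"
  then show "D (mmul ?S (mmul ?S (tpow U) (E \<rho>)) (adj (tpow U))) i j = \<tau> i j"
    using cptp_with_kraus_adj_A_op_recovers[OF assms(1,3) \<tau>_cols \<tau>_herm \<sigma>] by simp
qed

end
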